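(* Let $d\ge2$ be an integer, $a\in\mathbb C$, and $p(t)=a\Bigl((d-1)-\sum_{i=1}^d2t^i\Bigr)$. Suppose $a(d+1)$ is a root of unity and let $k$ be the smallest positive integer with $(a(d+1))^k=1$. Then $V_p$ has order $\operatorname{lcm}(k,d+1)$ if $d$ is odd, and $\operatorname{lcm}(k,2(d+1))$ if $d$ is even.
   Context: For $p(t)=a_0+a_1t+\cdots+a_dt^d$, $V_p$ is the $(d+1)\times(d+1)$ matrix whose $(i,j)$ entry ($0\le i,j\le d$) is $a_{(i-j-1)\bmod (d+1)}$. The order of an invertible matrix $M$ is the smallest $m\ge1$ with $M^m=I$. *)

theory Defs
  imports "Jordan_Normal_Form.Matrix" "HOL-Computational_Algebra.Polynomial"
begin

definition Vmat :: "nat \<Rightarrow> complex poly \<Rightarrow> complex mat" where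
  "Vmat d p = mat (d+1) (d+1)
     (\<lambda>(i,j). coeff p (nat ((int i - int j - 1) mod int (d+1))))"

definition has_order :: "complex mat \<Rightarrow> nat \<Rightarrow> bool" where
  "has_order M m \<longleftrightarrow> m \<ge> 1 \<and> M ^\<^sub>m m = 1\<^sub>m (dim_row M) \<and>
     (\<forall>j. 1 \<le> j \<and> j < m \<longrightarrow> M ^\<^sub>m j \<noteq> 1\<^sub>m (dim_row M))"

end

theory Submission imports Defs begin

text \<open>With \<open>n = d + 1\<close> and \<open>c = a n\<close>, one has \<open>V\<^sub>p = c (P - (2/n) J)\<close>, where \<open>P\<close> is the
  cyclic shift and \<open>J\<close> the all-ones matrix. Since \<open>P J = J P = J\<close> and \<open>J\<^sup>2 = n J\<close>, the
  powers are \<open>V\<^sub>p\<^sup>m = c\<^sup>m (P\<^sup>m + ((-1)\<^sup>m - 1)/n J)\<close>. Reading off two entries shows that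
  this is the identity exactly when \<open>c\<^sup>m = 1\<close>, \<open>n\<close> divides \<open>m\<close> and \<open>m\<close> is even, i.e. when
  \<open>lcm k (lcm n 2)\<close> divides \<open>m\<close>.\<close>

lemma power_eq_one_iff_dvd:
  fixes c :: "'a::monoid_mult"
  assumes "k \<ge> 1" "c ^ k = 1" "\<forall>j. 1 \<le> j \<and> j < k \<longrightarrow> c ^ j \<noteq> 1"
  shows "c ^ m = 1 \<longleftrightarrow> k dvd m"
proof
  assume "c ^ m = 1"
  moreover have "c ^ m = (c ^ k) ^ (m div k) * c ^ (m mod k)"
    by (simp flip: power_mult power_add)
  ultimately have "c ^ (m mod k) = 1"
    using assms(2) by simp
  moreover have "m mod k < k"
    using assms(1) by simp
  ultimately have "m mod k = 0"
    using assms(3) by (meson less_one not_less)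
  then show "k dvd m" by presburger
next
  assume "k dvd m"
  then show "c ^ m = 1"
    using assms(2) by (auto simp: power_mult)
qed

lemma lcm_2_right_nat: "lcm n 2 = (if even n then n else 2 * (n::nat))"
proof (cases "even n")
  case False
  then have "coprime n 2"
    by simp
  with False show ?thesis
    by (simp add: lcm_coprime)
qed simp

lemma has_order_if_pow_eq_one_iff_dvd:
  assumes "L \<ge> 1" "\<And>m. M ^\<^sub>m m = 1\<^sub>m (dim_row M) \<longleftrightarrow> L dvd m"
  shows "has_order M L"
  unfolding has_order_def using assms by (auto dest: dvd_imp_le)

definition dvd_ind :: "nat \<Rightarrow> int \<Rightarrow> complex" where
  "dvd_ind n x = of_bool (int n dvd x)"

lemma dvd_ind_diff_mod_left: "dvd_ind n (x mod int n - y) = dvd_ind n (x - y)"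
  by (simp add: dvd_ind_def mod_eq_dvd_iff[symmetric] mod_diff_left_eq)

lemma dvd_ind_uminus: "dvd_ind n (- x) = dvd_ind n x"
  by (simp add: dvd_ind_def)

lemma sum_dvd_ind:
  assumes "n > 0"
  shows "(\<Sum>l<n. dvd_ind n (int l - r) * f l) = f (nat (r mod int n))"
proof -
  have "int n dvd int l - r \<longleftrightarrow> l = nat (r mod int n)" if "l < n" for l
  proof -
    have "int n dvd int l - r \<longleftrightarrow> int l mod int n = r mod int n"
      by (simp add: mod_eq_dvd_iff)
    also have "\<dots> \<longleftrightarrow> l = nat (r mod int n)"
      using that assms by auto
    finally show ?thesis .
  qed
  then have "(\<Sum>l<n. dvd_ind n (int l - r) * f l) = (\<Sum>l<n. if l = nat (r mod int n) then f l else 0)"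
    by (intro sum.cong) (auto simp: dvd_ind_def)
  also have "\<dots> = f (nat (r mod int n))"
    using assms by (simp add: nat_less_iff)
  finally show ?thesis .
qed

text \<open>The entrywise form of \<open>(P\<^sup>m + A J) (P + B J) = P\<^bsup>m+1\<^esup> + (A + B + n A B) J\<close>.\<close>

lemma sum_shift_plus_const_mult:
  assumes "n > 0"
  shows "(\<Sum>l<n. (dvd_ind n (int i - int l - int m) + A) * (dvd_ind n (int l - int j - 1) + B))
    = dvd_ind n (int i - int j - int (Suc m)) + A + B + of_nat n * A * B"
proof -
  have sym: "dvd_ind n (int i - int l - int m) = dvd_ind n (int l - (int i - int m))" for l
    using dvd_ind_uminus[of n "int l - (int i - int m)"] by (simp add: algebra_simps)
  have "(\<Sum>l<n. (dvd_ind n (int i - int l - int m) + A) * (dvd_ind n (int l - int j - 1) + B))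
     = (\<Sum>l<n. dvd_ind n (int l - (int i - int m)) * dvd_ind n (int l - (int j + 1)))
       + (\<Sum>l<n. dvd_ind n (int l - (int i - int m)) * B)
       + (\<Sum>l<n. dvd_ind n (int l - (int j + 1)) * A) + (\<Sum>l<n. A * B)"
    unfolding sym by (simp add: sum.distrib algebra_simps)
  also have "\<dots> = dvd_ind n ((int i - int m) mod int n - (int j + 1)) + B + A + of_nat n * A * B"
    using assms by (simp add: sum_dvd_ind)
  finally show ?thesis
    by (simp add: dvd_ind_diff_mod_left algebra_simps)
qed

text \<open>The closed form \<open>c\<^sup>m (P\<^sup>m + ((-1)\<^sup>m - 1)/n J)\<close>: the entries of \<open>P\<^sup>m\<close> are
  \<open>dvd_ind n (i - j - m)\<close>.\<close>

definition Vpow :: "nat \<Rightarrow> complex \<Rightarrow> nat \<Rightarrow> complex mat" where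
  "Vpow n c m = mat n n (\<lambda>(i,j). c ^ m * (dvd_ind n (int i - int j - int m) + ((-1) ^ m - 1) / of_nat n))"

lemma dim_Vpow [simp]: "dim_row (Vpow n c m) = n" "dim_col (Vpow n c m) = n"
  by (auto simp: Vpow_def)

lemma Vpow_eq_iff:
  "Vpow n c m = Vpow n c m' \<longleftrightarrow> (\<forall>i<n. \<forall>j<n. Vpow n c m $$ (i,j) = Vpow n c m' $$ (i,j))"
  by auto

lemma Vpow_0: "n > 0 \<Longrightarrow> Vpow n c 0 = 1\<^sub>m n"
proof (rule eq_matI)
  fix i j assume "i < dim_row (1\<^sub>m n)" "j < dim_col (1\<^sub>m n)"
  then have "int n dvd int i - int j \<longleftrightarrow> i = j"
    by (auto simp: mod_eq_dvd_iff[symmetric])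
  with \<open>i < dim_row (1\<^sub>m n)\<close> \<open>j < dim_col (1\<^sub>m n)\<close>
  show "Vpow n c 0 $$ (i, j) = 1\<^sub>m n $$ (i, j)"
    by (simp add: Vpow_def dvd_ind_def)
qed auto

lemma Vpow_Suc:
  assumes "n > 0"
  shows "Vpow n c m * Vpow n c 1 = Vpow n c (Suc m)"
proof (rule eq_matI)
  fix i j assume "i < dim_row (Vpow n c (Suc m))" "j < dim_col (Vpow n c (Suc m))"
  then have ij: "i < n" "j < n" by auto
  define A :: complex where "A = ((-1) ^ m - 1) / of_nat n"
  define B :: complex where "B = - 2 / of_nat n"
  have "(Vpow n c m * Vpow n c 1) $$ (i,j)
      = (\<Sum>l<n. c ^ m * (dvd_ind n (int i - int l - int m) + A) * (c * (dvd_ind n (int l - int j - 1) + B)))"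
    using ij by (simp add: Vpow_def scalar_prod_def A_def B_def lessThan_atLeast0 mult.assoc)
  also have "\<dots> = c ^ Suc m * (\<Sum>l<n. (dvd_ind n (int i - int l - int m) + A) * (dvd_ind n (int l - int j - 1) + B))"
    by (simp add: sum_distrib_left algebra_simps)
  also have "\<dots> = c ^ Suc m * (dvd_ind n (int i - int j - int (Suc m)) + (A + B + of_nat n * A * B))"
    unfolding sum_shift_plus_const_mult[OF assms] by (simp add: algebra_simps)
  also have "A + B + of_nat n * A * B = ((-1) ^ Suc m - 1) / of_nat n"
    using assms by (simp add: A_def B_def field_simps)
  finally show "(Vpow n c m * Vpow n c 1) $$ (i,j) = Vpow n c (Suc m) $$ (i,j)"
    using ij by (simp add: Vpow_def)
qed auto

lemma pow_Vpow_1: "n > 0 \<Longrightarrow> Vpow n c 1 ^\<^sub>m m = Vpow n c m"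
proof (induction m)
  case (Suc m)
  then show ?case
    using Vpow_Suc[of n c m] by simp
qed (simp add: Vpow_0)

text \<open>The \<open>(0,1)\<close> entry forces \<open>m\<close> to be even (an odd \<open>m\<close> would need \<open>2/n \<in> {0,1}\<close>);
  then the \<open>(0,0)\<close> entry gives \<open>c\<^sup>m = 1\<close> and \<open>n dvd m\<close>.\<close>

lemma Vpow_eq_one_iff:
  assumes "n \<ge> 3" "c \<noteq> 0"
  shows "Vpow n c m = 1\<^sub>m n \<longleftrightarrow> c ^ m = 1 \<and> n dvd m \<and> even m"
proof
  assume id: "Vpow n c m = 1\<^sub>m n"
  have even: "even m"
  proof (rule ccontr)
    assume "odd m"
    then have "Vpow n c m $$ (0,1) = c ^ m * (dvd_ind n (- 1 - int m) - 2 / of_nat n)"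
      using assms(1) by (simp add: Vpow_def)
    with id assms have entry: "dvd_ind n (- 1 - int m) = 2 / of_nat n"
      by simp
    have "(of_nat n :: complex) \<noteq> of_nat 2"
      using assms(1) by (simp only: of_nat_eq_iff)
    then have "(2::complex) / of_nat n \<noteq> 0" "(2::complex) / of_nat n \<noteq> 1"
      using assms(1) by (simp_all add: field_simps)
    with entry show False
      unfolding dvd_ind_def by (cases "int n dvd - 1 - int m") simp_all
  qed
  then have "Vpow n c m $$ (0,0) = c ^ m * dvd_ind n (- int m)"
    using assms(1) by (simp add: Vpow_def)
  with id assms(1) have "c ^ m * dvd_ind n (- int m) = 1"
    by simp
  then have "c ^ m = 1 \<and> int n dvd - int m"
    unfolding dvd_ind_def by (cases "int n dvd - int m") simp_all
  with even show "c ^ m = 1 \<and> n dvd m \<and> even m"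
    by simp
next
  assume H: "c ^ m = 1 \<and> n dvd m \<and> even m"
  then have "int n dvd int i - int j - int m \<longleftrightarrow> int n dvd int i - int j" for i j
    by (simp add: dvd_diff_left_iff)
  with H have "Vpow n c m = Vpow n c 0"
    by (simp add: Vpow_eq_iff Vpow_def dvd_ind_def)
  then show "Vpow n c m = 1\<^sub>m n"
    using assms(1) by (simp add: Vpow_0)
qed

lemma Vmat_eq_Vpow_1:
  assumes "d \<ge> 2" "p = smult a ([:of_nat (d - 1):] - (\<Sum>i=1..d. monom 2 i))"
  shows "Vmat d p = Vpow (d+1) (a * of_nat (d+1)) 1"
proof (rule eq_matI)
  fix i j assume "i < dim_row (Vpow (d+1) (a * of_nat (d+1)) 1)" "j < dim_col (Vpow (d+1) (a * of_nat (d+1)) 1)"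
  then have ij: "i < d+1" "j < d+1" by auto
  define r where "r = (int i - int j - 1) mod int (d+1)"
  have "0 \<le> r" "r < int (d+1)" "r = 0 \<longleftrightarrow> int (d+1) dvd int i - int j - 1"
    unfolding r_def by (simp_all add: dvd_eq_mod_eq_0)
  then have r: "0 \<le> r" "r \<le> int d" "r = 0 \<longleftrightarrow> int (d+1) dvd int i - int j - 1"
    by simp_all
  have "coeff p t = a * ((if t = 0 then of_nat (d - 1) else 0) - (if t \<in> {1..d} then 2 else 0))" for t
    using assms(2) by (simp add: coeff_sum coeff_pCons split: nat.split)
  moreover have "of_nat (d - 1) = (of_nat d - 1 :: complex)"
    using assms(1) by simp
  ultimately have coeff_p: "coeff p t = (if t = 0 then a * (of_nat d - 1) else if t \<le> d then - 2 * a else 0)" for t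
    by simp
  have nz: "(of_nat (d+1) :: complex) \<noteq> 0"
    by (simp only: of_nat_eq_0_iff)
  have "Vmat d p $$ (i,j) = coeff p (nat r)"
    using ij by (simp add: Vmat_def r_def)
  also have "\<dots> = a * of_nat (d+1) * (of_bool (r = 0) - 2 / of_nat (d+1))"
  proof (cases "r = 0")
    case True
    with nz show ?thesis
      by (simp add: coeff_p field_simps)
  next
    case False
    with r(1,2) have "nat r \<noteq> 0" "nat r \<le> d"
      by auto
    with False nz show ?thesis
      by (simp add: coeff_p field_simps)
  qed
  finally show "Vmat d p $$ (i,j) = Vpow (d+1) (a * of_nat (d+1)) 1 $$ (i,j)"
    using ij r(3) by (simp add: Vpow_def dvd_ind_def)
qed (auto simp: Vmat_def)

theorem corollary17:
  fixes d k :: nat and a :: complex and p :: "complex poly"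
  assumes "d \<ge> 2"
    and "p = smult a ([:of_nat (d - 1):] - (\<Sum>i=1..d. monom 2 i))"
    and "k \<ge> 1" and "(a * of_nat (d+1)) ^ k = 1"
    and "\<forall>j. 1 \<le> j \<and> j < k \<longrightarrow> (a * of_nat (d+1)) ^ j \<noteq> 1"
  shows "has_order (Vmat d p) (if odd d then lcm k (d+1) else lcm k (2*(d+1)))"
proof (rule has_order_if_pow_eq_one_iff_dvd)
  define c where "c = a * of_nat (d+1)"
  have "c \<noteq> 0"
    using assms(3,4) unfolding c_def by (metis power_0_left not_one_le_zero zero_neq_one)
  have V: "Vmat d p = Vpow (d+1) c 1"
    unfolding c_def by (rule Vmat_eq_Vpow_1[OF assms(1,2)])
  fix m
  have "Vmat d p ^\<^sub>m m = 1\<^sub>m (dim_row (Vmat d p)) \<longleftrightarrow> Vpow (d+1) c m = 1\<^sub>m (d+1)"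
    unfolding V by (simp only: pow_Vpow_1 zero_less_Suc add_Suc_right dim_Vpow)
  also have "\<dots> \<longleftrightarrow> c ^ m = 1 \<and> d + 1 dvd m \<and> even m"
    using assms(1) \<open>c \<noteq> 0\<close> by (simp add: Vpow_eq_one_iff)
  also have "\<dots> \<longleftrightarrow> lcm k (lcm (d+1) 2) dvd m"
    using power_eq_one_iff_dvd[OF assms(3,4,5), of m] by (simp add: c_def)
  finally show "Vmat d p ^\<^sub>m m = 1\<^sub>m (dim_row (Vmat d p)) \<longleftrightarrow>
      (if odd d then lcm k (d+1) else lcm k (2*(d+1))) dvd m"
    by (simp add: lcm_2_right_nat)
qed (use assms(3) in \<open>simp add: lcm_pos_nat Suc_le_eq\<close>)

end
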